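(* Let $\Gamma$ be a cofinite discrete subgroup of $\mathrm{SL}_2(\mathbb{R})$ with cusps, $r\in\mathbb{C}$, $v$ a multiplier system for weight $r$, $z_0\in\mathbb{H}$, and $F\in A_r(\Gamma,v)$. (i) The map $\gamma\mapsto\psi^{z_0}_{F,\gamma}$ is an element of $Z^1(\Gamma;\mathcal{D}^\omega_{v,2-r})$. (ii) The cohomology class of $\psi^{z_0}_F$ in $H^1(\Gamma;\mathcal{D}^\omega_{v,2-r})$ does not depend on $z_0$, so $F\mapsto[\psi^{z_0}_F]$ is a well-defined linear map $\mathrm{coh}^\omega_r:A_r(\Gamma,v)\to H^1(\Gamma;\mathcal{D}^\omega_{v,2-r})$. (iii) If $r\in\mathbb{Z}_{\ge2}$ then $\mathrm{coh}^\omega_r A_r(\Gamma,v)\subset H^1(\Gamma;\mathcal{D}^{\mathrm{pol}}_{v,2-r})$.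
   Context: $\mathbb{H}$ upper, $\mathbb{H}^-$ lower half-plane; $\Gamma\ni-I$ discrete, $\Gamma\backslash\mathbb{H}$ of finite volume and noncompact. Argument convention: $\arg(cz+d)\in(-\pi,\pi]$ for $z\in\mathbb{H}$, $[-\pi,\pi)$ for $z\in\mathbb{H}^-$. A multiplier system for weight $r$: $v:\Gamma\to\mathbb{C}^*$ with $j(\gamma,z)=v(\gamma)(cz+d)^r$ satisfying $j(\gamma\delta,z)=j(\gamma,\delta z)j(\delta,z)$, $j(-\gamma,z)=j(\gamma,z)$. $A_r(\Gamma,v)$: holomorphic $F$ on $\mathbb{H}$ with $v(\gamma)^{-1}(cz+d)^{-r}F(\gamma z)=F(z)$ for $\gamma=\begin{pmatrix}*&*\\c&d\end{pmatrix}\in\Gamma$. $\psi^{z_0}_{F,\gamma}(t)=\int_{\gamma^{-1}z_0}^{z_0}(z-t)^{r-2}F(z)dz$ for $t\in\mathbb{H}^-$, with $-\pi/2<\arg(z-t)<3\pi/2$. $\Gamma$ acts on functions on $\mathbb{H}^-$ by $(\varphi|_{v,2-r}\gamma)(t)=v(\gamma)^{-1}(ct+d)^{r-2}\varphi(\gamma t)$. $\mathcal{D}^\omega_{v,2-r}$: holomorphic $\varphi$ on $\mathbb{H}^-$ such that $(i-t)^{2-r}\varphi(t)$ ($\arg(i-t)\in(-\pi/2,3\pi/2)$) extends holomorphically to an open neighbourhood of $\mathbb{H}^-\cup\mathbb{P}^1(\mathbb{R})$ in $\mathbb{P}^1(\mathbb{C})$, with this action. For $r\in\mathbb{Z}_{\ge2}$,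 $\mathcal{D}^{\mathrm{pol}}_{v,2-r}$ is the submodule of polynomial functions of degree at most $r-2$; $H^1(\Gamma;\mathcal{D}^{\mathrm{pol}}_{v,2-r})$ is regarded via the natural map into $H^1(\Gamma;\mathcal{D}^\omega_{v,2-r})$ (statement (iii) means the cocycles take values in $\mathcal{D}^{\mathrm{pol}}_{v,2-r}$). *)

theory Defs
  imports "HOL-Complex_Analysis.Complex_Analysis" "HOL-Computational_Algebra.Polynomial"
begin

section \<open>2x2 real matrices (a,b,c,d) = [[a,b],[c,d]]\<close>

type_synonym mat2 = "real \<times> real \<times> real \<times> real"

definition mmul :: "mat2 \<Rightarrow> mat2 \<Rightarrow> mat2" where
  "mmul g h = (case g of (a,b,c,d) \<Rightarrow> case h of (a',b',c',d') \<Rightarrow>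
     (a*a' + b*c', a*b' + b*d', c*a' + d*c', c*b' + d*d'))"

definition mdet :: "mat2 \<Rightarrow> real" where
  "mdet g = (case g of (a,b,c,d) \<Rightarrow> a*d - b*c)"

(* inverse of a determinant-one matrix *)
definition minv :: "mat2 \<Rightarrow> mat2" where
  "minv g = (case g of (a,b,c,d) \<Rightarrow> (d, -b, -c, a))"

definition mneg :: "mat2 \<Rightarrow> mat2" where
  "mneg g = (case g of (a,b,c,d) \<Rightarrow> (-a, -b, -c, -d))"

definition I2 :: mat2 where "I2 = (1, 0, 0, 1)"

definition cdf :: "mat2 \<Rightarrow> complex \<Rightarrow> complex" where
  "cdf g z = (case g of (a,b,c,d) \<Rightarrow> of_real c * z + of_real d)"

definition moeb :: "mat2 \<Rightarrow> complex \<Rightarrow> complex" where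
  "moeb g z = (case g of (a,b,c,d) \<Rightarrow> (of_real a * z + of_real b) / (of_real c * z + of_real d))"

definition Upper :: "complex set" where "Upper = {z. 0 < Im z}"
definition Lower :: "complex set" where "Lower = {z. Im z < 0}"

definition discrete_subgroup_SL2 :: "mat2 set \<Rightarrow> bool" where
  "discrete_subgroup_SL2 \<Gamma> \<longleftrightarrow>
     (\<forall>g\<in>\<Gamma>. mdet g = 1) \<and> I2 \<in> \<Gamma> \<and>
     (\<forall>g\<in>\<Gamma>. \<forall>h\<in>\<Gamma>. mmul g h \<in> \<Gamma>) \<and> (\<forall>g\<in>\<Gamma>. minv g \<in> \<Gamma>) \<and>
     (\<forall>g\<in>\<Gamma>. \<exists>e>0. \<forall>h\<in>\<Gamma>. dist h g < e \<longrightarrow> h = g)"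

definition hyp_measure :: "complex measure" where
  "hyp_measure = density lborel (\<lambda>z. ennreal (1 / (Im z)\<^sup>2))"

definition fundamental_domain :: "mat2 set \<Rightarrow> complex set \<Rightarrow> bool" where
  "fundamental_domain \<Gamma> F \<longleftrightarrow>
     F \<in> sets lborel \<and> F \<subseteq> Upper \<and> (\<Union>g\<in>\<Gamma>. moeb g ` F) = Upper \<and>
     (\<forall>g\<in>\<Gamma>. g \<noteq> I2 \<and> g \<noteq> mneg I2 \<longrightarrow> F \<inter> moeb g ` F \<in> null_sets lborel)"

definition cofinite :: "mat2 set \<Rightarrow> bool" where
  "cofinite \<Gamma> \<longleftrightarrow> (\<exists>F. fundamental_domain \<Gamma> F \<and> emeasure hyp_measure F < \<infinity>)"

(* Gamma\H is not compact, i.e. no compact K \<subseteq> H has Gamma-translates covering H *)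
definition has_cusps :: "mat2 set \<Rightarrow> bool" where
  "has_cusps \<Gamma> \<longleftrightarrow> \<not> (\<exists>K. compact K \<and> K \<subseteq> Upper \<and> (\<Union>g\<in>\<Gamma>. moeb g ` K) = Upper)"

(* arg in (-pi, pi] : used for (cz+d)^r, z in H *)
definition pow_H :: "complex \<Rightarrow> complex \<Rightarrow> complex" where
  "pow_H z w = exp (w * Ln z)"

(* arg in [-pi, pi) : used for (ct+d)^s, t in lower half plane *)
definition arg_low :: "complex \<Rightarrow> real" where
  "arg_low z = (if Arg z = pi then - pi else Arg z)"

definition pow_L :: "complex \<Rightarrow> complex \<Rightarrow> complex" where
  "pow_L z w = exp (w * (of_real (ln (cmod z)) + \<i> * of_real (arg_low z)))"

(* arg in (-pi/2, 3pi/2) : used for (z-t)^s and (i-t)^s *)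
definition arg_strip :: "complex \<Rightarrow> real" where
  "arg_strip z = (if Arg z \<le> - pi / 2 then Arg z + 2 * pi else Arg z)"

definition pow_S :: "complex \<Rightarrow> complex \<Rightarrow> complex" where
  "pow_S z w = exp (w * (of_real (ln (cmod z)) + \<i> * of_real (arg_strip z)))"

definition jfac :: "(mat2 \<Rightarrow> complex) \<Rightarrow> complex \<Rightarrow> mat2 \<Rightarrow> complex \<Rightarrow> complex" where
  "jfac v r g z = v g * pow_H (cdf g z) r"

definition multiplier_system :: "mat2 set \<Rightarrow> complex \<Rightarrow> (mat2 \<Rightarrow> complex) \<Rightarrow> bool" where
  "multiplier_system \<Gamma> r v \<longleftrightarrow>
     (\<forall>g\<in>\<Gamma>. v g \<noteq> 0) \<and>
     (\<forall>g\<in>\<Gamma>. \<forall>h\<in>\<Gamma>. \<forall>z\<in>Upper. jfac v r (mmul g h) z = jfac v r g (moeb h z) * jfac v r h z) \<and>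
     (\<forall>g\<in>\<Gamma>. \<forall>z\<in>Upper. jfac v r (mneg g) z = jfac v r g z)"

definition A_r :: "mat2 set \<Rightarrow> (mat2 \<Rightarrow> complex) \<Rightarrow> complex \<Rightarrow> (complex \<Rightarrow> complex) \<Rightarrow> bool" where
  "A_r \<Gamma> v r F \<longleftrightarrow> F holomorphic_on Upper \<and>
     (\<forall>g\<in>\<Gamma>. \<forall>z\<in>Upper. inverse (v g) * pow_H (cdf g z) (- r) * F (moeb g z) = F z)"

(* psi^{z0}_{F,g}(t) = integral from g^-1 z0 to z0 of (z-t)^(r-2) F(z) dz
   (path independent in H; we take the straight segment, which lies in H) *)
definition psi :: "complex \<Rightarrow> (complex \<Rightarrow> complex) \<Rightarrow> complex \<Rightarrow> mat2 \<Rightarrow> complex \<Rightarrow> complex" where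
  "psi z0 F r g t = contour_integral (linepath (moeb (minv g) z0) z0) (\<lambda>z. pow_S (z - t) (r - 2) * F z)"

definition slash :: "(mat2 \<Rightarrow> complex) \<Rightarrow> complex \<Rightarrow> (complex \<Rightarrow> complex) \<Rightarrow> mat2 \<Rightarrow> complex \<Rightarrow> complex" where
  "slash v r \<phi> g t = inverse (v g) * pow_L (cdf g t) (r - 2) * \<phi> (moeb g t)"

(* phi \<in> D^omega_{v,2-r}: (i-t)^(2-r) phi(t) extends holomorphically to an open
   neighbourhood of the closed lower half plane together with \<infinity> in P^1(C) *)
definition D_omega :: "complex \<Rightarrow> (complex \<Rightarrow> complex) \<Rightarrow> bool" where
  "D_omega r \<phi> \<longleftrightarrow> \<phi> holomorphic_on Lower \<and>
     (\<exists>U g. open U \<and> {t. Im t \<le> 0} \<subseteq> U \<and> (\<exists>R. {t. R < cmod t} \<subseteq> U) \<and>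
        g holomorphic_on U \<and> (\<forall>t\<in>Lower. g t = pow_S (\<i> - t) (2 - r) * \<phi> t) \<and>
        (\<exists>L. (g \<longlongrightarrow> L) at_infinity))"

definition D_pol :: "nat \<Rightarrow> (complex \<Rightarrow> complex) \<Rightarrow> bool" where
  "D_pol n \<phi> \<longleftrightarrow> (\<exists>p :: complex poly. degree p \<le> n \<and> (\<forall>t\<in>Lower. \<phi> t = poly p t))"

definition cocycle :: "((complex \<Rightarrow> complex) \<Rightarrow> bool) \<Rightarrow> mat2 set \<Rightarrow> (mat2 \<Rightarrow> complex) \<Rightarrow> complex
    \<Rightarrow> (mat2 \<Rightarrow> complex \<Rightarrow> complex) \<Rightarrow> bool" where
  "cocycle M \<Gamma> v r c \<longleftrightarrow> (\<forall>g\<in>\<Gamma>. M (c g)) \<and>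
     (\<forall>g\<in>\<Gamma>. \<forall>h\<in>\<Gamma>. \<forall>t\<in>Lower. c (mmul g h) t = slash v r (c g) h t + c h t)"

definition coboundary :: "((complex \<Rightarrow> complex) \<Rightarrow> bool) \<Rightarrow> mat2 set \<Rightarrow> (mat2 \<Rightarrow> complex) \<Rightarrow> complex
    \<Rightarrow> (mat2 \<Rightarrow> complex \<Rightarrow> complex) \<Rightarrow> bool" where
  "coboundary M \<Gamma> v r c \<longleftrightarrow> (\<exists>\<phi>. M \<phi> \<and> (\<forall>g\<in>\<Gamma>. \<forall>t\<in>Lower. c g t = slash v r \<phi> g t - \<phi> t))"

end

theory Submission
  imports Defs
begin

text \<open>Since (z - t)^(r-2) F(z) is holomorphic in z on the upper half-plane, the period integral
  I(A,B)(t) = integral from A to B of (z - t)^(r-2) F(z) dz has a primitive in its endpoints, so it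
  is additive in them. The substitution z = h w together with the transformation law of F shows
  that slashing I(A,B) by h just moves both endpoints by h^-1; no branch correction appears because
  c z + d and c t + d lie in opposite half-planes. Additivity then yields the cocycle relation, and
  shows that replacing z0 by z1 changes psi by the coboundary of I(z0,z1). A period integral lies in
  D^omega because (i - t)^(2-r) I(A,B)(t) is the integral of ((z - t)/(i - t))^(r-2) F(z), which is
  holomorphic in t away from the segment and, near infinity, holomorphic in 1/(i - t). For r = k >= 2
  the binomial expansion of (z - t)^(k-2) makes every period a polynomial of degree at most k - 2.\<close>

lemma convex_Upper: "convex Upper"
  unfolding Upper_def using convex_halfspace_Im_gt[of 0] by simp

lemma open_Upper: "open Upper"
  unfolding Upper_def using open_halfspace_Im_gt[of 0] by simp

lemma linepath_image_Upper: "A \<in> Upper \<Longrightarrow> B \<in> Upper \<Longrightarrow> path_image (linepath A B) \<subseteq> Upper"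
  using closed_segment_subset[OF _ _ convex_Upper] by simp

section \<open>Branches of the logarithm\<close>

definition log_strip :: "complex \<Rightarrow> complex" where
  "log_strip w = of_real (ln (cmod w)) + \<i> * of_real (arg_strip w)"

definition log_low :: "complex \<Rightarrow> complex" where
  "log_low w = of_real (ln (cmod w)) + \<i> * of_real (arg_low w)"

lemma pow_S_eq_exp_log_strip: "pow_S w s = exp (s * log_strip w)"
  by (simp add: pow_S_def log_strip_def)

lemma pow_L_eq_exp_log_low: "pow_L w s = exp (s * log_low w)"
  by (simp add: pow_L_def log_low_def)

lemma Ln_eq_ln_norm_Arg: "z \<noteq> 0 \<Longrightarrow> Ln z = of_real (ln (cmod z)) + \<i> * of_real (Arg z)"
  by (rule complex_eqI) (simp_all add: Arg_eq_Im_Ln)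

lemma log_strip_eq_Ln: assumes "0 < Im w" shows "log_strip w = Ln w"
proof -
  have "0 < Arg w" "w \<noteq> 0" using assms Arg_lt_pi by auto
  moreover have "\<not> Arg w \<le> - pi / 2" using \<open>0 < Arg w\<close> pi_gt_zero by linarith
  ultimately have "arg_strip w = Arg w" unfolding arg_strip_def by simp
  then show ?thesis using \<open>w \<noteq> 0\<close> by (simp add: log_strip_def Ln_eq_ln_norm_Arg)
qed

lemma pow_S_eq_exp_Ln: "0 < Im w \<Longrightarrow> pow_S w s = exp (s * Ln w)"
  by (simp add: pow_S_eq_exp_log_strip log_strip_eq_Ln)

lemma exp_log_strip: assumes "w \<noteq> 0" shows "exp (log_strip w) = w"
proof (cases "Arg w \<le> - pi / 2")
  case True
  then have "log_strip w = Ln w + 2 * pi * \<i>"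
    using assms by (simp add: log_strip_def arg_strip_def Ln_eq_ln_norm_Arg algebra_simps)
  then show ?thesis using assms by (simp add: exp_add)
next
  case False
  then show ?thesis using assms by (simp add: log_strip_def arg_strip_def Ln_eq_ln_norm_Arg [symmetric])
qed

lemma exp_log_low: assumes "w \<noteq> 0" shows "exp (log_low w) = w"
proof (cases "Arg w = pi")
  case True
  then have "log_low w = Ln w - 2 * pi * \<i>"
    using assms by (simp add: log_low_def arg_low_def Ln_eq_ln_norm_Arg algebra_simps)
  then show ?thesis using assms by (simp add: exp_diff)
next
  case False
  then show ?thesis using assms by (simp add: log_low_def arg_low_def Ln_eq_ln_norm_Arg [symmetric])
qed

lemma pow_L_pow_S_pow_H_mult:
  assumes q: "0 < Im q" and y: "0 < Im (q * p * m)" and "p \<noteq> 0" "m \<noteq> 0"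
    and arg: "- pi < arg_low m + Arg p" "arg_low m + Arg p < pi"
  shows "pow_L m s * pow_S q s * pow_H p s = pow_S (q * p * m) s"
proof -
  have "q \<noteq> 0" "q * p * m \<noteq> 0" using q y by auto
  then have "exp (log_low m + Ln q + Ln p) = exp (Ln (q * p * m))"
    using assms by (simp add: exp_add exp_log_low algebra_simps)
  then obtain n :: int where n: "log_low m + Ln q + Ln p = Ln (q * p * m) + (of_int (2 * n) * pi) * \<i>"
    using exp_eq by blast
  then have "Im (log_low m + Ln q + Ln p) = Im (Ln (q * p * m) + (of_int (2 * n) * pi) * \<i>)"
    by simp
  then have "arg_low m + Arg q + Arg p = Arg (q * p * m) + 2 * n * pi"
    using \<open>q \<noteq> 0\<close> \<open>p \<noteq> 0\<close> \<open>q * p * m \<noteq> 0\<close> by (simp add: log_low_def Arg_eq_Im_Ln)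
  moreover have "0 < Arg q" "Arg q < pi" "0 < Arg (q * p * m)" "Arg (q * p * m) < pi"
    using q y Arg_lt_pi[of q] Arg_lt_pi[of "q * p * m"] by blast+
  ultimately have "real_of_int n * (2 * pi) < 1 * (2 * pi)" "(-1) * (2 * pi) < real_of_int n * (2 * pi)"
    using arg by linarith+
  then have "real_of_int n < 1" "-1 < real_of_int n"
    using mult_right_less_imp_less[of "real_of_int n" "2*pi" 1]
      mult_right_less_imp_less[of "-1" "2*pi" "real_of_int n"] pi_gt_zero by auto
  then have "n = 0" by linarith
  then have "log_low m + log_strip q + Ln p = log_strip (q * p * m)"
    using n q y by (simp add: log_strip_eq_Ln)
  then show ?thesis
    by (simp add: pow_L_eq_exp_log_low pow_S_eq_exp_log_strip pow_H_def flip: exp_add) (metis distrib_left)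
qed

lemma pow_H_minus_2: assumes "p \<noteq> 0" shows "pow_H p r / p\<^sup>2 = pow_H p (r - 2)"
proof -
  have "p\<^sup>2 = exp (2 * Ln p)" using assms exp_of_nat_mult[of 2 "Ln p"] by simp
  then show ?thesis by (simp add: pow_H_def left_diff_distrib exp_diff)
qed

section \<open>Matrices acting by Moebius transformations\<close>

lemma mdet_mmul: "mdet (mmul g h) = mdet g * mdet h"
  by (cases g; cases h) (auto simp: mdet_def mmul_def algebra_simps)

lemma mdet_minv: "mdet (minv g) = mdet g"
  by (cases g) (auto simp: mdet_def minv_def algebra_simps)

lemma minv_mmul: "minv (mmul g h) = mmul (minv h) (minv g)"
  by (cases g; cases h) (auto simp: minv_def mmul_def algebra_simps)

lemma cdf_nonzero: assumes "mdet h = 1" "Im z \<noteq> 0" shows "cdf h z \<noteq> 0"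
proof
  obtain a b c d where h: "h = (a,b,c,d)" by (cases h) auto
  assume "cdf h z = 0"
  then have e: "of_real c * z + of_real d = 0" by (simp add: h cdf_def)
  from arg_cong[OF e, of Im] have "c * Im z = 0" by simp
  then have "c = 0" "d = 0" using assms e by auto
  then show False using assms by (simp add: h mdet_def)
qed

lemma Im_moeb: assumes "mdet h = 1" shows "Im (moeb h z) = Im z / (cmod (cdf h z))\<^sup>2"
proof -
  obtain a b c d where h: "h = (a,b,c,d)" by (cases h) auto
  have "Im (moeb h z) = (Im (of_real a * z + of_real b) * Re (of_real c * z + of_real d) -
          Re (of_real a * z + of_real b) * Im (of_real c * z + of_real d)) / (cmod (cdf h z))\<^sup>2"
    by (simp add: h moeb_def cdf_def Im_divide cmod_power2)
  also have "Im (of_real a * z + of_real b) * Re (of_real c * z + of_real d) -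
          Re (of_real a * z + of_real b) * Im (of_real c * z + of_real d) = (a*d - b*c) * Im z"
    by (simp add: algebra_simps)
  finally show ?thesis using assms by (simp add: h mdet_def)
qed

lemma moeb_in_Upper: "mdet h = 1 \<Longrightarrow> z \<in> Upper \<Longrightarrow> moeb h z \<in> Upper"
  using Im_moeb cdf_nonzero by (fastforce simp: Upper_def)

lemma moeb_in_Lower: "mdet h = 1 \<Longrightarrow> z \<in> Lower \<Longrightarrow> moeb h z \<in> Lower"
  using Im_moeb cdf_nonzero by (fastforce simp: Lower_def divide_neg_pos)

lemma moeb_minv_in_Upper: "mdet h = 1 \<Longrightarrow> z \<in> Upper \<Longrightarrow> moeb (minv h) z \<in> Upper"
  by (simp add: moeb_in_Upper mdet_minv)

lemma moeb_mmul:
  assumes "mdet g = 1" "mdet h = 1" "Im z \<noteq> 0"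
  shows "moeb (mmul g h) z = moeb g (moeb h z)"
proof -
  obtain a b c d where h: "h = (a,b,c,d)" by (cases h) auto
  obtain a' b' c' d' where g: "g = (a',b',c',d')" by (cases g) auto
  define u where "u = of_real a * z + of_real b"
  define p where "p = of_real c * z + of_real d"
  have p: "p \<noteq> 0" using cdf_nonzero[OF assms(2,3)] by (simp add: h cdf_def p_def)
  have "cdf (mmul g h) z \<noteq> 0" using cdf_nonzero[of "mmul g h" z] assms by (simp add: mdet_mmul)
  then have "of_real c' * u + of_real d' * p \<noteq> 0"
    by (simp add: h g cdf_def mmul_def u_def p_def algebra_simps)
  then have "moeb g (u / p) = (of_real a' * u + of_real b' * p) / (of_real c' * u + of_real d' * p)"
    using p by (simp add: g moeb_def divide_simps)
  then show ?thesis by (simp add: g h moeb_def mmul_def u_def p_def algebra_simps)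
qed

lemma moeb_moeb_minv: assumes "mdet h = 1" "Im z \<noteq> 0" shows "moeb h (moeb (minv h) z) = z"
proof -
  have "moeb (mmul h (minv h)) z = z"
    by (cases h) (simp add: mmul_def minv_def moeb_def mdet_def,
        use assms in \<open>simp add: mdet_def algebra_simps flip: of_real_mult of_real_diff\<close>)
  then show ?thesis using moeb_mmul[of h "minv h" z] assms by (simp add: mdet_minv)
qed

lemma moeb_diff:
  assumes "mdet h = 1" "cdf h w \<noteq> 0" "cdf h t \<noteq> 0"
  shows "moeb h w - moeb h t = (w - t) / (cdf h w * cdf h t)"
proof -
  obtain a b c d where h: "h = (a,b,c,d)" by (cases h) auto
  have det: "of_real a * of_real d - of_real b * of_real c = (1::complex)"
    using assms by (simp add: h mdet_def flip: of_real_mult of_real_diff)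
  have "moeb h w - moeb h t = ((of_real a * w + of_real b) * (of_real c * t + of_real d) -
      (of_real a * t + of_real b) * (of_real c * w + of_real d)) / (cdf h w * cdf h t)"
    using assms by (simp add: h moeb_def cdf_def field_simps)
  also have "(of_real a * w + of_real b) * (of_real c * t + of_real d) -
      (of_real a * t + of_real b) * (of_real c * w + of_real d) =
      (of_real a * of_real d - of_real b * of_real c) * (w - t)"
    by (simp add: algebra_simps)
  finally show ?thesis using det by simp
qed

lemma has_field_derivative_moeb:
  assumes "mdet h = 1" "cdf h w \<noteq> 0"
  shows "(moeb h has_field_derivative 1 / (cdf h w)\<^sup>2) (at w)"
proof -
  obtain a b c d where h: "h = (a,b,c,d)" by (cases h) auto
  have det: "of_real a * of_real d - of_real b * of_real c = (1::complex)"
    using assms by (simp add: h mdet_def flip: of_real_mult of_real_diff)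
  have "moeb h = (\<lambda>w. (of_real a * w + of_real b) / (of_real c * w + of_real d))"
    by (simp add: h moeb_def fun_eq_iff)
  moreover have "((\<lambda>w. (of_real a * w + of_real b) / (of_real c * w + of_real d)) has_field_derivative
     ((of_real a * of_real d - of_real b * of_real c) / (of_real c * w + of_real d)^2)) (at w)"
    using assms by (auto intro!: derivative_eq_intros simp: h cdf_def power2_eq_square algebra_simps)
  ultimately show ?thesis using det by (simp add: h cdf_def)
qed

text \<open>For \<open>z\<close> in the upper and \<open>t\<close> in the lower half-plane, \<open>c z + d\<close> and \<open>c t + d\<close>
  lie in opposite closed half-planes, so their arguments cannot add up to \<open>\<pm>pi\<close>.\<close>

lemma arg_low_cdf_add_Arg_cdf:
  assumes "mdet h = 1" "z \<in> Upper" "t \<in> Lower"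
  shows "- pi < arg_low (cdf h t) + Arg (cdf h z) \<and> arg_low (cdf h t) + Arg (cdf h z) < pi"
proof -
  obtain a b c d where h: "h = (a,b,c,d)" by (cases h) auto
  have iz: "Im (cdf h z) = c * Im z" and it: "Im (cdf h t) = c * Im t" by (simp_all add: h cdf_def)
  have z: "Im z > 0" and t: "Im t < 0" using assms by (auto simp: Upper_def Lower_def)
  consider "c > 0" | "c < 0" | "c = 0" by linarith
  then show ?thesis
  proof cases
    case 1
    then have "Im (cdf h z) > 0" "Im (cdf h t) < 0" using iz it z t by (auto simp: mult_pos_neg)
    then have "0 < Arg (cdf h z)" "Arg (cdf h z) < pi" "Arg (cdf h t) < 0" "- pi < Arg (cdf h t)"
      using Arg_lt_pi[of "cdf h z"] Arg_neg_iff[of "cdf h t"] Arg_bounded[of "cdf h t"] by auto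
    then show ?thesis by (simp add: arg_low_def)
  next
    case 2
    then have "Im (cdf h z) < 0" "Im (cdf h t) > 0" using iz it z t by (auto simp: mult_neg_pos mult_neg_neg)
    then have "0 < Arg (cdf h t)" "Arg (cdf h t) < pi" "Arg (cdf h z) < 0" "- pi < Arg (cdf h z)"
      using Arg_lt_pi[of "cdf h t"] Arg_neg_iff[of "cdf h z"] Arg_bounded[of "cdf h z"] by auto
    then show ?thesis by (simp add: arg_low_def)
  next
    case 3
    then have "d \<noteq> 0" "cdf h z = of_real d" "cdf h t = of_real d" using assms by (auto simp: h cdf_def mdet_def)
    then show ?thesis using pi_gt_zero by (simp add: arg_low_def)
  qed
qed

section \<open>Period integrals\<close>

definition period_integral ::
    "(complex \<Rightarrow> complex) \<Rightarrow> complex \<Rightarrow> complex \<Rightarrow> complex \<Rightarrow> complex \<Rightarrow> complex" where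
  "period_integral F r t A B = contour_integral (linepath A B) (\<lambda>z. pow_S (z - t) (r - 2) * F z)"

lemma psi_eq_period_integral: "psi z0 F r g = (\<lambda>t. period_integral F r t (moeb (minv g) z0) z0)"
  by (simp add: psi_def period_integral_def fun_eq_iff)

lemma holomorphic_period_integrand:
  assumes "F holomorphic_on Upper" "t \<in> Lower"
  shows "(\<lambda>z. pow_S (z - t) (r - 2) * F z) holomorphic_on Upper"
proof (rule holomorphic_transform)
  show "(\<lambda>z. exp ((r - 2) * Ln (z - t)) * F z) holomorphic_on Upper"
    using assms by (auto intro!: holomorphic_intros simp: complex_nonpos_Reals_iff Upper_def Lower_def)
  show "exp ((r - 2) * Ln (z - t)) * F z = pow_S (z - t) (r - 2) * F z" if "z \<in> Upper" for z
    using assms that by (simp add: pow_S_eq_exp_Ln Upper_def Lower_def)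
qed

lemma period_integrand_integrable:
  assumes "F holomorphic_on Upper" "t \<in> Lower" "A \<in> Upper" "B \<in> Upper"
  shows "(\<lambda>z. pow_S (z - t) (r - 2) * F z) contour_integrable_on linepath A B"
  using contour_integrable_holomorphic_simple[OF holomorphic_period_integrand[OF assms(1,2)] open_Upper]
    linepath_image_Upper[OF assms(3,4)] by simp

lemma holomorphic_on_Upper_has_primitive:
  assumes "f holomorphic_on Upper"
  obtains P where "\<And>z. z \<in> Upper \<Longrightarrow> (P has_field_derivative f z) (at z)"
proof -
  obtain P where "\<And>z. z \<in> Upper \<Longrightarrow> (P has_field_derivative f z) (at z within Upper)"
    using holomorphic_convex_primitive'[OF convex_Upper open_Upper assms] by blast
  then show ?thesis using that at_within_open[OF _ open_Upper] by metis
qed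

lemma contour_integral_linepath_primitive:
  assumes "\<And>z. z \<in> Upper \<Longrightarrow> (P has_field_derivative f z) (at z)" "A \<in> Upper" "B \<in> Upper"
  shows "contour_integral (linepath A B) f = P B - P A"
proof -
  have "(f has_contour_integral (P (pathfinish (linepath A B)) - P (pathstart (linepath A B)))) (linepath A B)"
    using assms linepath_image_Upper[OF assms(2,3)]
    by (intro contour_integral_primitive[of Upper]) (auto intro: has_field_derivative_at_within)
  then show ?thesis by (simp add: contour_integral_unique)
qed

lemma period_integral_join:
  assumes "F holomorphic_on Upper" "t \<in> Lower" "X \<in> Upper" "Y \<in> Upper" "Z \<in> Upper"
  shows "period_integral F r t X Y + period_integral F r t Y Z = period_integral F r t X Z"
proof -
  obtain P where P: "\<And>z. z \<in> Upper \<Longrightarrow> (P has_field_derivative (pow_S (z - t) (r - 2) * F z)) (at z)"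
    using holomorphic_on_Upper_has_primitive[OF holomorphic_period_integrand[OF assms(1,2)]] by blast
  show ?thesis
    unfolding period_integral_def using contour_integral_linepath_primitive[OF P] assms(3-5) by simp
qed

lemma period_integral_linear:
  assumes "F holomorphic_on Upper" "G holomorphic_on Upper" "t \<in> Lower" "A \<in> Upper" "B \<in> Upper"
  shows "period_integral (\<lambda>z. a * F z + b * G z) r t A B
    = a * period_integral F r t A B + b * period_integral G r t A B"
proof -
  have "period_integral (\<lambda>z. a * F z + b * G z) r t A B = contour_integral (linepath A B)
      (\<lambda>z. a * (pow_S (z - t) (r - 2) * F z) + b * (pow_S (z - t) (r - 2) * G z))"
    unfolding period_integral_def by (simp add: algebra_simps)
  also have "\<dots> = a * period_integral F r t A B + b * period_integral G r t A B"
    unfolding period_integral_def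
    using period_integrand_integrable[OF assms(1,3-5)] period_integrand_integrable[OF assms(2-5)]
    by (simp add: contour_integral_add contour_integral_lmul contour_integrable_lmul)
  finally show ?thesis .
qed

lemma slash_period_integrand:
  assumes det: "mdet h = 1" and "v h \<noteq> 0"
    and aut: "inverse (v h) * pow_H (cdf h z) (- r) * F (moeb h z) = F z"
    and z: "z \<in> Upper" and t: "t \<in> Lower"
  shows "inverse (v h) * pow_L (cdf h t) (r - 2)
      * (pow_S (moeb h z - moeb h t) (r - 2) * F (moeb h z) * (1 / (cdf h z)\<^sup>2))
    = pow_S (z - t) (r - 2) * F z"
proof -
  define p where "p = cdf h z"
  define m where "m = cdf h t"
  define q where "q = moeb h z - moeb h t"
  have p: "p \<noteq> 0" and m: "m \<noteq> 0"
    using cdf_nonzero[OF det] z t unfolding p_def m_def Upper_def Lower_def by auto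
  have qpm: "q * p * m = z - t" using moeb_diff[OF det] p m by (simp add: q_def p_def m_def)
  have "0 < Im q" using moeb_in_Upper[OF det z] moeb_in_Lower[OF det t]
    by (simp add: q_def Upper_def Lower_def)
  moreover have "0 < Im (q * p * m)" using z t qpm by (simp add: Upper_def Lower_def)
  ultimately have branch: "pow_L m (r - 2) * pow_S q (r - 2) * pow_H p (r - 2) = pow_S (z - t) (r - 2)"
    using pow_L_pow_S_pow_H_mult[OF _ _ p m] arg_low_cdf_add_Arg_cdf[OF det z t] qpm
    by (simp add: p_def m_def)
  have Fhz: "F (moeb h z) = v h * pow_H p r * F z"
    using aut assms(2) by (auto simp: p_def pow_H_def exp_minus field_simps)
  have "inverse (v h) * pow_L m (r - 2) * (pow_S q (r - 2) * F (moeb h z) * (1 / p\<^sup>2))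
      = pow_L m (r - 2) * pow_S q (r - 2) * (pow_H p r / p\<^sup>2) * F z"
    using assms(2) by (simp add: Fhz field_simps)
  also have "\<dots> = pow_S (z - t) (r - 2) * F z"
    by (simp only: pow_H_minus_2[OF p] branch)
  finally show ?thesis by (simp only: p_def m_def q_def)
qed

lemma slash_period_integral:
  assumes det: "mdet h = 1" and "v h \<noteq> 0"
    and aut: "\<And>z. z \<in> Upper \<Longrightarrow> inverse (v h) * pow_H (cdf h z) (- r) * F (moeb h z) = F z"
    and F: "F holomorphic_on Upper" and t: "t \<in> Lower" and A: "A \<in> Upper" and B: "B \<in> Upper"
  shows "slash v r (\<lambda>t. period_integral F r t A B) h t
    = period_integral F r t (moeb (minv h) A) (moeb (minv h) B)"
proof -
  define C where "C = inverse (v h) * pow_L (cdf h t) (r - 2)"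
  obtain P where P: "\<And>z. z \<in> Upper \<Longrightarrow> (P has_field_derivative pow_S (z - moeb h t) (r - 2) * F z) (at z)"
    using holomorphic_on_Upper_has_primitive holomorphic_period_integrand[OF F moeb_in_Lower[OF det t]]
    by blast
  have Q: "((\<lambda>w. C * P (moeb h w)) has_field_derivative pow_S (z - t) (r - 2) * F z) (at z)"
    if z: "z \<in> Upper" for z
  proof -
    have "cdf h z \<noteq> 0" using cdf_nonzero[OF det] z by (auto simp: Upper_def)
    then have "((\<lambda>w. C * P (moeb h w)) has_field_derivative
        C * (pow_S (moeb h z - moeb h t) (r - 2) * F (moeb h z) * (1 / (cdf h z)\<^sup>2))) (at z)"
      by (rule DERIV_cmult[OF DERIV_chain2[OF P[OF moeb_in_Upper[OF det z]] has_field_derivative_moeb[OF det]]])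
    then show ?thesis
      unfolding C_def slash_period_integrand[where F = F and v = v, OF det assms(2) aut[OF z] z t] .
  qed
  have "period_integral F r t (moeb (minv h) A) (moeb (minv h) B)
      = C * P (moeb h (moeb (minv h) B)) - C * P (moeb h (moeb (minv h) A))"
    unfolding period_integral_def
    by (rule contour_integral_linepath_primitive[OF Q moeb_minv_in_Upper[OF det A] moeb_minv_in_Upper[OF det B]])
  also have "\<dots> = C * (P B - P A)"
    using moeb_moeb_minv[OF det] A B by (simp add: Upper_def right_diff_distrib)
  also have "P B - P A = period_integral F r (moeb h t) A B"
    unfolding period_integral_def by (rule contour_integral_linepath_primitive[OF P A B, symmetric])
  finally show ?thesis by (simp add: slash_def C_def)
qed

section \<open>Period integrals lie in \<open>D\<^sup>\<omega>\<close>\<close>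

lemma holomorphic_on_linepath_integral_param:
  fixes K K' :: "complex \<Rightarrow> complex \<Rightarrow> complex"
  assumes W: "open W"
    and deriv: "\<And>z s. z \<in> closed_segment A B \<Longrightarrow> s \<in> W \<Longrightarrow> (K z has_field_derivative K' z s) (at s)"
    and cont: "continuous_on (closed_segment A B \<times> W) (\<lambda>p. K (fst p) (snd p))"
    and cont': "continuous_on (closed_segment A B \<times> W) (\<lambda>p. K' (fst p) (snd p))"
  shows "(\<lambda>s. contour_integral (linepath A B) (\<lambda>z. K z s)) holomorphic_on W"
proof -
  define L where "L s x = K (linepath A B x) s * (B - A)" for s x
  have eq: "(\<lambda>s. contour_integral (linepath A B) (\<lambda>z. K z s)) = (\<lambda>s. integral (cbox 0 1) (L s))"
    unfolding contour_integral_integral L_def vector_derivative_linepath_at cbox_interval by (rule refl)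
  have lin: "linepath A B x \<in> closed_segment A B" if "x \<in> cbox 0 1" for x :: real
    using that by (auto simp: linepath_in_path)
  have cl: "continuous_on (cbox 0 (1::real)) (linepath A B)"
    by (simp add: linepath_def continuous_intros)
  have "(\<lambda>s. integral (cbox 0 1) (L s)) analytic_on W"
    unfolding analytic_on_def
  proof
    fix s0 assume "s0 \<in> W"
    then obtain e where e: "e > 0" "ball s0 e \<subseteq> W" using W openE by blast
    have "(\<lambda>s. integral (cbox 0 1) (L s)) holomorphic_on ball s0 e"
    proof (rule leibniz_rule_holomorphic[where fx = "\<lambda>s x. K' (linepath A B x) s * (B - A)"])
      fix s x assume "s \<in> ball s0 e" "(x::real) \<in> cbox 0 1"
      then have "((\<lambda>s. L s x) has_field_derivative K' (linepath A B x) s * (B - A)) (at s)"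
        unfolding L_def using e lin by (intro DERIV_cmult_right deriv) auto
      then show "((\<lambda>s. L s x) has_field_derivative K' (linepath A B x) s * (B - A)) (at s within ball s0 e)"
        by (rule has_field_derivative_at_within)
    next
      fix s assume "s \<in> ball s0 e"
      then have "continuous_on (cbox 0 1) (\<lambda>x. K (linepath A B x) s)"
        by (intro continuous_on_compose2[OF cont, of _ "\<lambda>x. (linepath A B x, s)", simplified])
           (use cl lin e in \<open>auto intro!: continuous_intros\<close>)
      then show "L s integrable_on cbox 0 1"
        unfolding L_def by (intro integrable_continuous continuous_intros)
    next
      have "continuous_on (ball s0 e \<times> cbox 0 1) (\<lambda>p. (linepath A B (snd p), fst p))"
        by (intro continuous_intros continuous_on_compose2[OF cl]) auto
      moreover have "(\<lambda>p. (linepath A B (snd p), fst p)) ` (ball s0 e \<times> cbox 0 1) \<subseteq> closed_segment A B \<times> W"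
        using lin e by auto
      ultimately have "continuous_on (ball s0 e \<times> cbox 0 1) (\<lambda>p. K' (linepath A B (snd p)) (fst p))"
        using continuous_on_compose2[OF cont'] by fastforce
      then show "continuous_on (ball s0 e \<times> cbox 0 1) (\<lambda>(s, x). K' (linepath A B x) s * (B - A))"
        by (auto intro!: continuous_intros simp: case_prod_beta')
    qed auto
    then show "\<exists>e>0. (\<lambda>s. integral (cbox 0 1) (L s)) holomorphic_on ball s0 e" using e by blast
  qed
  then show ?thesis unfolding eq by (rule analytic_imp_holomorphic)
qed

lemma holomorphic_on_linepath_integral_exp_Ln:
  assumes "open W"
    and dphi: "\<And>z s. z \<in> closed_segment A B \<Longrightarrow> s \<in> W \<Longrightarrow> (\<phi> z has_field_derivative \<phi>' z s) (at s)"
    and cphi: "continuous_on (closed_segment A B \<times> W) (\<lambda>p. \<phi> (fst p) (snd p))"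
    and cphi': "continuous_on (closed_segment A B \<times> W) (\<lambda>p. \<phi>' (fst p) (snd p))"
    and nz: "\<And>z s. z \<in> closed_segment A B \<Longrightarrow> s \<in> W \<Longrightarrow> \<phi> z s \<notin> \<real>\<^sub>\<le>\<^sub>0"
    and cF: "continuous_on (closed_segment A B) F"
  shows "(\<lambda>s. contour_integral (linepath A B) (\<lambda>z. exp (c * Ln (\<phi> z s)) * F z)) holomorphic_on W"
proof (rule holomorphic_on_linepath_integral_param[OF \<open>open W\<close>,
      where K' = "\<lambda>z s. exp (c * Ln (\<phi> z s)) * (c * (\<phi>' z s / \<phi> z s)) * F z"])
  fix z s assume z: "z \<in> closed_segment A B" and s: "s \<in> W"
  show "((\<lambda>s. exp (c * Ln (\<phi> z s)) * F z) has_field_derivative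
      exp (c * Ln (\<phi> z s)) * (c * (\<phi>' z s / \<phi> z s)) * F z) (at s)"
    by (rule derivative_eq_intros DERIV_chain2[OF has_field_derivative_Ln[OF nz[OF z s]] dphi[OF z s]] refl
        | simp add: divide_inverse)+
next
  have cF': "continuous_on (closed_segment A B \<times> W) (\<lambda>p. F (fst p))"
    by (rule continuous_on_compose2[OF cF continuous_on_fst]) auto
  have "\<phi> (fst p) (snd p) \<notin> \<real>\<^sub>\<le>\<^sub>0" "\<phi> (fst p) (snd p) \<noteq> 0" if "p \<in> closed_segment A B \<times> W" for p
    using nz that by (auto, metis nonpos_Reals_zero_I)
  then show "continuous_on (closed_segment A B \<times> W) (\<lambda>p. exp (c * Ln (\<phi> (fst p) (snd p))) * F (fst p))"
    and "continuous_on (closed_segment A B \<times> W)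
      (\<lambda>p. exp (c * Ln (\<phi> (fst p) (snd p))) * (c * (\<phi>' (fst p) (snd p) / \<phi> (fst p) (snd p))) * F (fst p))"
    using cphi cphi' cF' by (auto intro!: continuous_intros)
qed

lemma one_add_notin_nonpos_Reals: "cmod u < 1 \<Longrightarrow> 1 + u \<notin> \<real>\<^sub>\<le>\<^sub>0"
  using abs_Re_le_cmod[of u] by (auto simp: complex_nonpos_Reals_iff)

lemma divide_notin_nonpos_Reals_Upper:
  assumes "0 < Im x" "0 < Im y" shows "x / y \<notin> \<real>\<^sub>\<le>\<^sub>0"
proof
  assume "x / y \<in> \<real>\<^sub>\<le>\<^sub>0"
  then obtain a where a: "x / y = of_real a" "a \<le> 0" by (auto elim!: nonpos_Reals_cases)
  moreover have "y \<noteq> 0" using assms by auto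
  ultimately have "Im x = a * Im y" by (simp add: divide_eq_eq)
  then show False using a assms by (simp add: mult_nonpos_nonneg leD)
qed

lemma Ln_divide_Upper:
  assumes "0 < Im x" "0 < Im y" shows "Ln (x / y) = Ln x - Ln y"
proof -
  have "x \<noteq> 0" "y \<noteq> 0" "y \<notin> \<real>\<^sub>\<le>\<^sub>0" using assms by (auto simp: complex_nonpos_Reals_iff)
  moreover have "Im (Ln x) = Arg x" "Im (Ln y) = Arg y" using calculation by (simp_all add: Arg_eq_Im_Ln)
  moreover have "0 < Arg x" "Arg x < pi" "0 < Arg y" "Arg y < pi"
    using assms Arg_lt_pi[of x] Arg_lt_pi[of y] by auto
  ultimately have "Ln (x * inverse y) = Ln x + Ln (inverse y)"
    by (intro Ln_times_simple) (auto simp: Ln_inverse)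
  then show ?thesis using \<open>y \<notin> \<real>\<^sub>\<le>\<^sub>0\<close> by (simp add: divide_inverse Ln_inverse)
qed

lemma pow_S_mult_period_integral:
  assumes F: "F holomorphic_on Upper" and t: "t \<in> Lower" and "A \<in> Upper" "B \<in> Upper"
  shows "pow_S (\<i> - t) (2 - r) * period_integral F r t A B
    = contour_integral (linepath A B) (\<lambda>z. exp ((r - 2) * Ln ((z - t) / (\<i> - t))) * F z)"
proof -
  have it: "0 < Im (\<i> - t)" using t by (simp add: Lower_def)
  have "pow_S (\<i> - t) (2 - r) * period_integral F r t A B =
      contour_integral (linepath A B) (\<lambda>z. pow_S (\<i> - t) (2 - r) * (pow_S (z - t) (r - 2) * F z))"
    unfolding period_integral_def
    by (rule contour_integral_lmul[OF period_integrand_integrable[OF assms], symmetric])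
  also have "\<dots> = contour_integral (linepath A B) (\<lambda>z. exp ((r - 2) * Ln ((z - t) / (\<i> - t))) * F z)"
  proof (rule contour_integral_cong[OF refl])
    fix z assume "z \<in> path_image (linepath A B)"
    then have zt: "0 < Im (z - t)" using linepath_image_Upper[OF assms(3,4)] t by (auto simp: Upper_def Lower_def)
    have "(r - 2) * Ln ((z - t) / (\<i> - t)) = (2 - r) * Ln (\<i> - t) + (r - 2) * Ln (z - t)"
      by (simp add: Ln_divide_Upper[OF zt it] algebra_simps)
    then show "pow_S (\<i> - t) (2 - r) * (pow_S (z - t) (r - 2) * F z) = exp ((r - 2) * Ln ((z - t) / (\<i> - t))) * F z"
      by (simp add: pow_S_eq_exp_Ln[OF it] pow_S_eq_exp_Ln[OF zt] exp_add)
  qed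
  finally show ?thesis .
qed

text \<open>Near \<open>\<infinity>\<close> the integral is a holomorphic function of \<open>s = 1 / (\<i> - t)\<close>,
  because \<open>(z - t) / (\<i> - t) = 1 + (z - \<i>) s\<close>.\<close>

lemma tendsto_linepath_integral_at_infinity:
  assumes cF: "continuous_on (closed_segment A B) F"
    and K: "0 < K" "\<And>z. z \<in> closed_segment A B \<Longrightarrow> cmod (z - \<i>) \<le> K"
  shows "((\<lambda>t. contour_integral (linepath A B) (\<lambda>z. exp (c * Ln ((z - t) / (\<i> - t))) * F z))
    \<longlongrightarrow> contour_integral (linepath A B) F) at_infinity"
proof -
  define \<rho> where "\<rho> = 1 / K"
  define g where "g s = contour_integral (linepath A B) (\<lambda>z. exp (c * Ln (1 + (z - \<i>) * s)) * F z)" for s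
  have "g holomorphic_on ball 0 \<rho>"
    unfolding g_def
  proof (rule holomorphic_on_linepath_integral_exp_Ln[where \<phi>' = "\<lambda>z s. z - \<i>"])
    fix z s :: complex assume z: "z \<in> closed_segment A B" and s: "s \<in> ball 0 \<rho>"
    show "((\<lambda>s. 1 + (z - \<i>) * s) has_field_derivative z - \<i>) (at s)"
      by (auto intro!: derivative_eq_intros)
    have "cmod ((z - \<i>) * s) \<le> K * cmod s" using K(2)[OF z] by (simp add: norm_mult mult_right_mono)
    also have "\<dots> < 1" using s K(1) by (simp add: \<rho>_def field_simps)
    finally show "1 + (z - \<i>) * s \<notin> \<real>\<^sub>\<le>\<^sub>0" by (rule one_add_notin_nonpos_Reals)
  qed (use cF in \<open>auto intro!: continuous_intros\<close>)
  then have "isCont g 0"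
    using K(1) continuous_on_eq_continuous_at[OF open_ball, of 0 \<rho> g] holomorphic_on_imp_continuous_on
    by (auto simp: \<rho>_def)
  moreover have "((\<lambda>t. 1 / (\<i> - t)) \<longlongrightarrow> 0) at_infinity"
  proof (rule tendsto_divide_0[OF tendsto_const])
    have "filterlim (\<lambda>t. - \<i> + t) at_infinity at_infinity"
      by (rule tendsto_add_filterlim_at_infinity[OF tendsto_const filterlim_ident])
    then show "filterlim (\<lambda>t. \<i> - t) at_infinity at_infinity"
      unfolding filterlim_at_infinity_conv_norm_at_top by (simp add: norm_minus_commute)
  qed
  ultimately have "((\<lambda>t. g (1 / (\<i> - t))) \<longlongrightarrow> g 0) at_infinity"
    by (rule isCont_tendsto_compose)
  moreover have "eventually (\<lambda>t. g (1 / (\<i> - t)) =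
      contour_integral (linepath A B) (\<lambda>z. exp (c * Ln ((z - t) / (\<i> - t))) * F z)) at_infinity"
    unfolding eventually_at_infinity
  proof (intro exI allI impI)
    fix t :: complex assume "2 \<le> norm t"
    then have "\<i> - t \<noteq> 0" by auto
    then have "1 + (z - \<i>) * (1 / (\<i> - t)) = (z - t) / (\<i> - t)" for z
      by (simp add: field_simps)
    then show "g (1 / (\<i> - t)) = contour_integral (linepath A B) (\<lambda>z. exp (c * Ln ((z - t) / (\<i> - t))) * F z)"
      by (simp add: g_def)
  qed
  ultimately show ?thesis by (simp add: g_def tendsto_cong)
qed

lemma D_omega_intro:
  assumes "open U" "{t. Im t \<le> 0} \<subseteq> U" "{t. R < cmod t} \<subseteq> U" and G: "G holomorphic_on U"
    and eq: "\<And>t. t \<in> Lower \<Longrightarrow> G t = pow_S (\<i> - t) (2 - r) * \<phi> t"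
    and lim: "(G \<longlongrightarrow> L) at_infinity"
  shows "D_omega r \<phi>"
proof -
  have LU: "Lower \<subseteq> U" using assms(2) by (auto simp: Lower_def)
  have "(\<lambda>t. exp ((r - 2) * Ln (\<i> - t)) * G t) holomorphic_on Lower"
    using holomorphic_on_subset[OF G LU]
    by (intro holomorphic_intros) (auto simp: Lower_def complex_nonpos_Reals_iff)
  moreover have "exp ((r - 2) * Ln (\<i> - t)) * G t = \<phi> t" if "t \<in> Lower" for t
  proof -
    have "0 < Im (\<i> - t)" using that by (simp add: Lower_def)
    then show ?thesis
      by (simp add: eq[OF that] pow_S_eq_exp_Ln mult.assoc flip: exp_add) (simp add: algebra_simps)
  qed
  ultimately have "\<phi> holomorphic_on Lower" by (rule holomorphic_transform)
  then show ?thesis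
    unfolding D_omega_def using assms by blast
qed

lemma D_omega_period_integral:
  assumes F: "F holomorphic_on Upper" and A: "A \<in> Upper" and B: "B \<in> Upper"
  shows "D_omega r (\<lambda>t. period_integral F r t A B)"
proof -
  define S where "S = closed_segment A B"
  define \<delta> where "\<delta> = min 1 (min (Im A) (Im B))"
  define K where "K = max (cmod (A - \<i>)) (cmod (B - \<i>)) + 1"
  define U where "U = {t. Im t < \<delta>} \<union> {t. 2 * K + 1 < cmod t}"
  have \<delta>: "0 < \<delta>" "\<delta> \<le> 1" using A B by (auto simp: \<delta>_def Upper_def)
  have "S \<subseteq> {z. \<delta> \<le> Im z}"
    unfolding S_def by (rule closed_segment_subset) (auto simp: \<delta>_def convex_halfspace_Im_ge)
  then have Im_S: "\<delta> \<le> Im z" if "z \<in> S" for z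
    using that by blast
  have "S \<subseteq> cball \<i> K"
    unfolding S_def by (rule closed_segment_subset) (auto simp: K_def dist_norm norm_minus_commute)
  then have K: "1 \<le> K" "\<And>z. z \<in> S \<Longrightarrow> cmod (z - \<i>) \<le> K"
    by (auto simp: K_def dist_norm norm_minus_commute le_max_iff_disj)
  have cF: "continuous_on S F"
    using holomorphic_on_imp_continuous_on[OF F] linepath_image_Upper[OF A B]
    by (auto simp: S_def intro: continuous_on_subset)
  have U_ne_i: "\<i> - t \<noteq> 0" if "t \<in> U" for t
    using that \<delta> K by (auto simp: U_def)
  have ratio: "(z - t) / (\<i> - t) \<notin> \<real>\<^sub>\<le>\<^sub>0" if z: "z \<in> S" and t: "t \<in> U" for z t
  proof (cases "Im t < \<delta>")
    case True
    then show ?thesis using \<delta> Im_S[OF z] by (intro divide_notin_nonpos_Reals_Upper) auto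
  next
    case False
    then have "2 * K < cmod (\<i> - t)"
      using t norm_triangle_ineq4[of \<i> "\<i> - t"] by (auto simp: U_def)
    then have "cmod ((z - \<i>) / (\<i> - t)) < 1"
      using K(2)[OF z] K(1) by (simp add: norm_divide divide_less_eq)
    moreover have "(z - t) / (\<i> - t) = 1 + (z - \<i>) / (\<i> - t)"
      using U_ne_i[OF t] by (simp add: field_simps)
    ultimately show ?thesis by (simp add: one_add_notin_nonpos_Reals)
  qed
  have openU: "open U"
    unfolding U_def by (intro open_Un open_halfspace_Im_lt open_Collect_less continuous_intros)
  define G where "G t = contour_integral (linepath A B) (\<lambda>z. exp ((r - 2) * Ln ((z - t) / (\<i> - t))) * F z)"
    for t
  have G_holo: "G holomorphic_on U"
    unfolding G_def using openU
  proof (rule holomorphic_on_linepath_integral_exp_Ln[where \<phi>' = "\<lambda>z t. (z - \<i>) / (\<i> - t)\<^sup>2"])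
    fix z s assume z: "z \<in> closed_segment A B" and s: "s \<in> U"
    show "((\<lambda>t. (z - t) / (\<i> - t)) has_field_derivative (z - \<i>) / (\<i> - s)\<^sup>2) (at s)"
      using U_ne_i[OF s] by (auto intro!: derivative_eq_intros simp: power2_eq_square field_simps)
    show "(z - s) / (\<i> - s) \<notin> \<real>\<^sub>\<le>\<^sub>0" using ratio z s by (simp add: S_def)
  next
    show "continuous_on (closed_segment A B \<times> U) (\<lambda>p. (fst p - snd p) / (\<i> - snd p))"
      and "continuous_on (closed_segment A B \<times> U) (\<lambda>p. (fst p - \<i>) / (\<i> - snd p)\<^sup>2)"
      using U_ne_i by (auto intro!: continuous_intros)
  qed (use cF in \<open>simp add: S_def\<close>)
  show ?thesis
  proof (rule D_omega_intro[OF openU _ _ G_holo])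
    show "{t. Im t \<le> 0} \<subseteq> U" "{t. 2 * K + 1 < cmod t} \<subseteq> U"
      using \<delta> by (auto simp: U_def)
    show "G t = pow_S (\<i> - t) (2 - r) * period_integral F r t A B" if "t \<in> Lower" for t
      using pow_S_mult_period_integral[OF F that A B] by (simp add: G_def)
    show "(G \<longlongrightarrow> contour_integral (linepath A B) F) at_infinity"
      unfolding G_def using cF K by (intro tendsto_linepath_integral_at_infinity) (auto simp: S_def)
  qed
qed

lemma D_omega_zero: "D_omega r (\<lambda>_. 0)"
  unfolding D_omega_def
  by (intro conjI exI[of _ UNIV] exI[of _ "\<lambda>_. 0"]) (auto intro: holomorphic_intros)

section \<open>Polynomial periods for integral weight\<close>

lemma pow_S_of_nat: "w \<noteq> 0 \<Longrightarrow> pow_S w (of_nat n) = w ^ n"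
  by (simp add: pow_S_eq_exp_log_strip exp_of_nat_mult exp_log_strip)

lemma contour_integral_power_diff_eq_poly:
  fixes F :: "complex \<Rightarrow> complex"
  assumes "\<And>j. j \<le> n \<Longrightarrow> (\<lambda>z. z ^ j * F z) contour_integrable_on g"
  obtains p :: "complex poly"
  where "degree p \<le> n" "\<And>t. contour_integral g (\<lambda>z. (z - t) ^ n * F z) = poly p t"
proof
  define c where "c j = of_nat (n choose j) * (-1) ^ j * contour_integral g (\<lambda>z. z ^ (n - j) * F z)" for j
  define p where "p = (\<Sum>j\<le>n. monom (c j) j)"
  show "degree p \<le> n"
    unfolding p_def by (rule degree_sum_le) (auto intro: order.trans[OF degree_monom_le])
  fix t
  have int: "(\<lambda>z. z ^ (n - j) * F z) contour_integrable_on g" for j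
    using assms by simp
  have "(z - t) ^ n * F z = (\<Sum>j\<le>n. (of_nat (n choose j) * (-t) ^ j) * (z ^ (n - j) * F z))" for z
    using binomial_ring[of "-t" z n] by (simp add: sum_distrib_right mult.assoc)
  then have "contour_integral g (\<lambda>z. (z - t) ^ n * F z)
      = (\<Sum>j\<le>n. contour_integral g (\<lambda>z. (of_nat (n choose j) * (-t) ^ j) * (z ^ (n - j) * F z)))"
    using int by (simp add: contour_integral_sum contour_integrable_lmul)
  also have "\<dots> = (\<Sum>j\<le>n. c j * t ^ j)"
  proof (rule sum.cong[OF refl])
    fix j
    show "contour_integral g (\<lambda>z. (of_nat (n choose j) * (-t) ^ j) * (z ^ (n - j) * F z)) = c j * t ^ j"
      unfolding contour_integral_lmul[OF int] c_def by (simp add: power_minus[of t] algebra_simps)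
  qed
  also have "\<dots> = poly p t"
    by (simp add: p_def poly_sum poly_monom)
  finally show "contour_integral g (\<lambda>z. (z - t) ^ n * F z) = poly p t" .
qed

lemma D_pol_period_integral:
  assumes F: "F holomorphic_on Upper" and A: "A \<in> Upper" and B: "B \<in> Upper" and k: "2 \<le> k"
  shows "D_pol (k - 2) (\<lambda>t. period_integral F (of_nat k) t A B)"
proof -
  have "(\<lambda>z. z ^ j * F z) contour_integrable_on linepath A B" for j
    using F linepath_image_Upper[OF A B]
    by (intro contour_integrable_holomorphic_simple[OF _ open_Upper]) (auto intro!: holomorphic_intros)
  then obtain p :: "complex poly" where p: "degree p \<le> k - 2"
    "\<And>t. contour_integral (linepath A B) (\<lambda>z. (z - t) ^ (k - 2) * F z) = poly p t"
    using contour_integral_power_diff_eq_poly by metis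
  have "period_integral F (of_nat k) t A B = poly p t" if t: "t \<in> Lower" for t
  proof -
    have "of_nat k - 2 = (of_nat (k - 2) :: complex)" using k by (simp add: of_nat_diff)
    moreover have "z - t \<noteq> 0" if "z \<in> path_image (linepath A B)" for z
      using that linepath_image_Upper[OF A B] t by (auto simp: Upper_def Lower_def)
    ultimately show ?thesis
      unfolding period_integral_def p(2)[symmetric]
      by (intro contour_integral_cong) (simp_all add: pow_S_of_nat)
  qed
  then show ?thesis using p(1) by (auto simp: D_pol_def)
qed

section \<open>The period cocycle\<close>

lemma coboundary_vanishing:
  "(\<And>g t. g \<in> \<Gamma> \<Longrightarrow> t \<in> Lower \<Longrightarrow> c g t = 0) \<Longrightarrow> coboundary (D_omega r) \<Gamma> v r c"
  unfolding coboundary_def by (intro exI[of _ "\<lambda>_. 0"] conjI ballI D_omega_zero) (simp add: slash_def)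

lemma psi_linear:
  assumes "F holomorphic_on Upper" "G holomorphic_on Upper" "mdet g = 1" "z0 \<in> Upper" "t \<in> Lower"
  shows "psi z0 (\<lambda>z. a * F z + b * G z) r g t = a * psi z0 F r g t + b * psi z0 G r g t"
  using assms by (simp add: psi_eq_period_integral period_integral_linear moeb_minv_in_Upper)

context
  fixes \<Gamma> :: "mat2 set" and v :: "mat2 \<Rightarrow> complex" and r :: complex and F :: "complex \<Rightarrow> complex"
  assumes det: "\<And>g. g \<in> \<Gamma> \<Longrightarrow> mdet g = 1"
    and v_nonzero: "\<And>g. g \<in> \<Gamma> \<Longrightarrow> v g \<noteq> 0"
    and F: "A_r \<Gamma> v r F"
begin

lemma holomorphic_automorphic_form: "F holomorphic_on Upper"
  using F by (simp add: A_r_def)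

lemma slash_period_integral_Gamma:
  assumes "h \<in> \<Gamma>" "t \<in> Lower" "A \<in> Upper" "B \<in> Upper"
  shows "slash v r (\<lambda>t. period_integral F r t A B) h t
    = period_integral F r t (moeb (minv h) A) (moeb (minv h) B)"
  using assms F det v_nonzero holomorphic_automorphic_form
  by (intro slash_period_integral) (auto simp: A_r_def)

lemma psi_cocycle_identity:
  assumes z0: "z0 \<in> Upper" and g: "g \<in> \<Gamma>" and h: "h \<in> \<Gamma>" and t: "t \<in> Lower"
  shows "psi z0 F r (mmul g h) t = slash v r (psi z0 F r g) h t + psi z0 F r h t"
proof -
  define a where "a = moeb (minv g) z0"
  have a: "a \<in> Upper" using moeb_minv_in_Upper[OF det[OF g] z0] by (simp add: a_def)
  have "moeb (minv (mmul g h)) z0 = moeb (minv h) a"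
    using det[OF g] det[OF h] z0 by (simp add: a_def minv_mmul moeb_mmul mdet_minv Upper_def)
  then have "psi z0 F r (mmul g h) t = period_integral F r t (moeb (minv h) a) z0"
    by (simp add: psi_eq_period_integral)
  also have "\<dots> = period_integral F r t (moeb (minv h) a) (moeb (minv h) z0)
      + period_integral F r t (moeb (minv h) z0) z0"
    using moeb_minv_in_Upper[OF det[OF h]] a z0
    by (intro period_integral_join[symmetric] holomorphic_automorphic_form t) auto
  also have "\<dots> = slash v r (psi z0 F r g) h t + psi z0 F r h t"
    using slash_period_integral_Gamma[OF h t a z0] by (simp add: psi_eq_period_integral a_def)
  finally show ?thesis .
qed

lemma cocycle_psi:
  assumes "z0 \<in> Upper"
  shows "cocycle (D_omega r) \<Gamma> v r (psi z0 F r)"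
  unfolding cocycle_def
  using D_omega_period_integral[OF holomorphic_automorphic_form moeb_minv_in_Upper[OF det assms] assms]
    psi_cocycle_identity[OF assms]
  by (simp add: psi_eq_period_integral)

lemma cocycle_psi_pol:
  assumes "r = of_nat k" "2 \<le> k" "z0 \<in> Upper"
  shows "cocycle (D_pol (k - 2)) \<Gamma> v r (psi z0 F r)"
  unfolding cocycle_def
  using D_pol_period_integral[OF holomorphic_automorphic_form moeb_minv_in_Upper[OF det assms(3)] assms(3,2)]
    psi_cocycle_identity[OF assms(3)]
  by (simp add: psi_eq_period_integral assms(1))

lemma coboundary_psi_diff:
  assumes z0: "z0 \<in> Upper" and z1: "z1 \<in> Upper"
  shows "coboundary (D_omega r) \<Gamma> v r (\<lambda>g t. psi z0 F r g t - psi z1 F r g t)"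
  unfolding coboundary_def
proof (intro exI[of _ "\<lambda>t. period_integral F r t z0 z1"] conjI ballI)
  show "D_omega r (\<lambda>t. period_integral F r t z0 z1)"
    by (rule D_omega_period_integral[OF holomorphic_automorphic_form z0 z1])
  fix g t assume g: "g \<in> \<Gamma>" and t: "t \<in> Lower"
  note join = period_integral_join[where r = r, OF holomorphic_automorphic_form t]
  note up = moeb_minv_in_Upper[OF det[OF g]]
  have "period_integral F r t (moeb (minv g) z0) z0 + period_integral F r t z0 z1
      = period_integral F r t (moeb (minv g) z0) (moeb (minv g) z1) + period_integral F r t (moeb (minv g) z1) z1"
    using join[OF up[OF z0] z0 z1] join[OF up[OF z0] up[OF z1] z1] by simp
  then show "psi z0 F r g t - psi z1 F r g t
      = slash v r (\<lambda>t. period_integral F r t z0 z1) g t - period_integral F r t z0 z1"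
    unfolding slash_period_integral_Gamma[OF g t z0 z1] psi_eq_period_integral by algebra
qed

end

theorem proposition2p4:
  fixes \<Gamma> :: "mat2 set" and r :: complex and v :: "mat2 \<Rightarrow> complex"
    and z0 :: complex and F :: "complex \<Rightarrow> complex"
  assumes "discrete_subgroup_SL2 \<Gamma>" and "mneg I2 \<in> \<Gamma>" and "cofinite \<Gamma>" and "has_cusps \<Gamma>"
    and "multiplier_system \<Gamma> r v" and "z0 \<in> Upper" and "A_r \<Gamma> v r F"
  shows "cocycle (D_omega r) \<Gamma> v r (psi z0 F r)
    \<and> (\<forall>z1\<in>Upper. coboundary (D_omega r) \<Gamma> v r (\<lambda>g t. psi z0 F r g t - psi z1 F r g t))
    \<and> (\<forall>G a b. A_r \<Gamma> v r G \<longrightarrow>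
         coboundary (D_omega r) \<Gamma> v r
           (\<lambda>g t. psi z0 (\<lambda>z. a * F z + b * G z) r g t - (a * psi z0 F r g t + b * psi z0 G r g t)))
    \<and> (\<forall>k::nat. 2 \<le> k \<and> r = of_nat k \<longrightarrow>
         (\<exists>c. cocycle (D_pol (k - 2)) \<Gamma> v r c \<and>
              coboundary (D_omega r) \<Gamma> v r (\<lambda>g t. psi z0 F r g t - c g t)))"
proof -
  have det: "\<And>g. g \<in> \<Gamma> \<Longrightarrow> mdet g = 1"
    using assms(1) by (simp add: discrete_subgroup_SL2_def)
  have v: "\<And>g. g \<in> \<Gamma> \<Longrightarrow> v g \<noteq> 0"
    using assms(5) by (simp add: multiplier_system_def)
  note F = assms(7) and z0 = assms(6)
  have "\<exists>c. cocycle (D_pol (k - 2)) \<Gamma> v r c \<and>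
      coboundary (D_omega r) \<Gamma> v r (\<lambda>g t. psi z0 F r g t - c g t)" if "2 \<le> k \<and> r = of_nat k" for k
    using that cocycle_psi_pol[OF det v F _ _ z0] by (intro exI[of _ "psi z0 F r"] conjI coboundary_vanishing) auto
  moreover have "coboundary (D_omega r) \<Gamma> v r
      (\<lambda>g t. psi z0 (\<lambda>z. a * F z + b * G z) r g t - (a * psi z0 F r g t + b * psi z0 G r g t))"
    if "A_r \<Gamma> v r G" for G a b
    using that F det z0 by (intro coboundary_vanishing) (simp add: psi_linear A_r_def)
  ultimately show ?thesis
    using cocycle_psi[OF det v F z0] coboundary_psi_diff[OF det v F z0] by blast
qed

end
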